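(* Let $X$ be a complex Banach space, $\mathcal{F}$ an algebra with unit, and $\Phi_1,\Phi_2:\mathcal{F}\to\mathcal{C}(X)$ calculi. Suppose there is a subset $\mathcal{E}\subseteq\mathcal{F}$ such that (1) $\Phi_1(e)=\Phi_2(e)\in\mathcal{L}(X)$ for all $e\in\mathcal{E}$, and (2) $\mathcal{F}$ is anchored in $\mathcal{E}$ (with respect to $\Phi_1$, equivalently $\Phi_2$). Then $\Phi_1=\Phi_2$.
   Context: $\mathcal{F}$ need not be commutative. $\mathcal{L}(X)$, $\mathcal{C}(X)$: bounded, resp. closed linear operators on $X$; operator inclusions are graph inclusions, sums/products have natural domains, "$Tx=y$" means $x\in\mathrm{dom}(T)$, $Tx=y$. A proto-calculus is a map $\Phi:\mathcal{F}\to\mathcal{C}(X)$ with (FC1) $\Phi(\mathbf{1})=I$; (FC2) $\lambda\Phi(f)\subseteq\Phi(\lambda f)$, $\Phi(f)+\Phi(g)\subseteq\Phi(f+g)$; (FC3) $\Phi(f)\Phi(g)\subseteq\Phi(fg)$ with $\mathrm{dom}(\Phi(f)\Phi(g))=\mathrm{dom}(\Phi(g))\cap\mathrm{dom}(\Phi(fg))$. $\mathrm{bdd}(\mathcal{F},\Phi)=\{f:\Phi(f)\in\mathcal{L}(X)\}$, $\mathrm{reg}(f,\Phi)=\{e: e,ef\in\mathrm{bdd}(\mathcal{F},\Phi)\}$. A calculus is a proto-calculus such that for every $f\in\mathcal{F}$ and $x,y\in X$: $\Phi(f)x=y\iff\Phi(ef)x=\Phi(e)y$ for all $e\in\mathrm{reg}(f,\Phi)$.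 For $\mathcal{E}\subseteq\mathcal{F}$ and $f\in\mathcal{F}$ let $[f]_{\mathcal{E}}=\{e\in\mathcal{E}:ef\in\mathcal{E}\}$; $f$ is anchored in $\mathcal{E}$ (w.r.t. $\Phi$) if $[f]_{\mathcal{E}}$ is nonempty, consists of $\Phi$-bounded elements, and $\bigcap_{e\in[f]_{\mathcal{E}}}\ker\Phi(e)=\{0\}$; $\mathcal{F}$ is anchored in $\mathcal{E}$ if every $f\in\mathcal{F}$ is. *)

theory Defs
  imports "HOL-Analysis.Analysis"
begin

definition complex_banach_scaling :: "(complex \<Rightarrow> 'x::banach \<Rightarrow> 'x) \<Rightarrow> bool" where
  "complex_banach_scaling sX \<longleftrightarrow>
     module sX \<and>
     (\<forall>r x. sX (complex_of_real r) x = scaleR r x) \<and>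
     (\<forall>c x. norm (sX c x) = cmod c * norm x)"

definition complex_algebra_scaling :: "(complex \<Rightarrow> 'f::{ring,monoid_mult} \<Rightarrow> 'f) \<Rightarrow> bool" where
  "complex_algebra_scaling sF \<longleftrightarrow>
     module sF \<and>
     (\<forall>c a b. sF c (a * b) = sF c a * b \<and> sF c (a * b) = a * sF c b)"

text \<open>Operators are represented by their graphs; "T x = y" means (x,y) \<in> T.\<close>
definition closed_op :: "(complex \<Rightarrow> 'x::banach \<Rightarrow> 'x) \<Rightarrow> ('x \<times> 'x) set \<Rightarrow> bool" where
  "closed_op sX T \<longleftrightarrow>
     (0, 0) \<in> T \<and>
     (\<forall>x y u v. (x, y) \<in> T \<longrightarrow> (u, v) \<in> T \<longrightarrow> (x + u, y + v) \<in> T) \<and>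
     (\<forall>c x y. (x, y) \<in> T \<longrightarrow> (sX c x, sX c y) \<in> T) \<and>
     (\<forall>x y z. (x, y) \<in> T \<longrightarrow> (x, z) \<in> T \<longrightarrow> y = z) \<and>
     closed T"

definition bounded_op :: "('x::real_normed_vector \<times> 'x) set \<Rightarrow> bool" where
  "bounded_op T \<longleftrightarrow> Domain T = UNIV \<and> (\<exists>C. \<forall>(x, y) \<in> T. norm y \<le> C * norm x)"

definition op_scale :: "(complex \<Rightarrow> 'x \<Rightarrow> 'x) \<Rightarrow> complex \<Rightarrow> ('x \<times> 'x) set \<Rightarrow> ('x \<times> 'x) set" where
  "op_scale sX c T = {(x, sX c y) | x y. (x, y) \<in> T}"

definition op_add :: "('x::plus \<times> 'x) set \<Rightarrow> ('x \<times> 'x) set \<Rightarrow> ('x \<times> 'x) set" where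
  "op_add S T = {(x, y + z) | x y z. (x, y) \<in> S \<and> (x, z) \<in> T}"

text \<open>Product S T (first T, then S), natural domain.\<close>
definition op_comp :: "('x \<times> 'x) set \<Rightarrow> ('x \<times> 'x) set \<Rightarrow> ('x \<times> 'x) set" where
  "op_comp S T = {(x, z) | x y z. (x, y) \<in> T \<and> (y, z) \<in> S}"

definition op_ker :: "('x::zero \<times> 'x) set \<Rightarrow> 'x set" where
  "op_ker T = {x. (x, 0) \<in> T}"

definition proto_calculus ::
  "(complex \<Rightarrow> 'x::banach \<Rightarrow> 'x) \<Rightarrow> (complex \<Rightarrow> 'f::{ring,monoid_mult} \<Rightarrow> 'f) \<Rightarrow> ('f \<Rightarrow> ('x \<times> 'x) set) \<Rightarrow> bool" where
  "proto_calculus sX sF \<Phi> \<longleftrightarrow>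
     (\<forall>f. closed_op sX (\<Phi> f)) \<and>
     \<Phi> 1 = Id \<and>
     (\<forall>c f. op_scale sX c (\<Phi> f) \<subseteq> \<Phi> (sF c f)) \<and>
     (\<forall>f g. op_add (\<Phi> f) (\<Phi> g) \<subseteq> \<Phi> (f + g)) \<and>
     (\<forall>f g. op_comp (\<Phi> f) (\<Phi> g) \<subseteq> \<Phi> (f * g) \<and>
            Domain (op_comp (\<Phi> f) (\<Phi> g)) = Domain (\<Phi> g) \<inter> Domain (\<Phi> (f * g)))"

definition bdd_set :: "('f \<Rightarrow> ('x::real_normed_vector \<times> 'x) set) \<Rightarrow> 'f set" where
  "bdd_set \<Phi> = {f. bounded_op (\<Phi> f)}"

definition reg_set :: "('f::times \<Rightarrow> ('x::real_normed_vector \<times> 'x) set) \<Rightarrow> 'f \<Rightarrow> 'f set" where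
  "reg_set \<Phi> f = {e. e \<in> bdd_set \<Phi> \<and> e * f \<in> bdd_set \<Phi>}"

definition calculus ::
  "(complex \<Rightarrow> 'x::banach \<Rightarrow> 'x) \<Rightarrow> (complex \<Rightarrow> 'f::{ring,monoid_mult} \<Rightarrow> 'f) \<Rightarrow> ('f \<Rightarrow> ('x \<times> 'x) set) \<Rightarrow> bool" where
  "calculus sX sF \<Phi> \<longleftrightarrow>
     proto_calculus sX sF \<Phi> \<and>
     (\<forall>f x y. (x, y) \<in> \<Phi> f \<longleftrightarrow>
        (\<forall>e \<in> reg_set \<Phi> f. \<exists>w. (x, w) \<in> \<Phi> (e * f) \<and> (y, w) \<in> \<Phi> e))"

definition anchor_set :: "'f set \<Rightarrow> 'f::times \<Rightarrow> 'f set" where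
  "anchor_set E f = {e \<in> E. e * f \<in> E}"

definition anchored_in :: "('f::times \<Rightarrow> ('x::real_normed_vector \<times> 'x) set) \<Rightarrow> 'f set \<Rightarrow> 'f \<Rightarrow> bool" where
  "anchored_in \<Phi> E f \<longleftrightarrow>
     anchor_set E f \<noteq> {} \<and>
     (\<forall>e \<in> anchor_set E f. bounded_op (\<Phi> e)) \<and>
     (\<Inter>e \<in> anchor_set E f. op_ker (\<Phi> e)) = {0}"

end

theory Submission
  imports Defs
begin

text \<open>If \<open>\<Phi>\<^sub>1(g)x = y\<close> and
  \<open>\<Phi>\<^sub>2(g)x = y'\<close>, then for every \<open>d \<in> [g]\<^sub>\<E>\<close> multiplicativity gives
  \<open>\<Phi>(d)y = \<Phi>(dg)x = \<Phi>(d)y'\<close>, so \<open>y - y'\<close> lies in the joint kernel of the \<open>\<Phi>(d)\<close>, which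
  is trivial; hence \<open>\<Phi>\<^sub>1(g) \<subseteq> \<Phi>\<^sub>2(g)\<close> whenever \<open>\<Phi>\<^sub>2(g)\<close> is everywhere defined.
  If \<open>\<Phi>\<^sub>2(g)\<close> is bounded and \<open>\<Phi>\<^sub>2(g)x = y\<close>, the calculus property of \<open>\<Phi>\<^sub>1\<close> reduces
  \<open>\<Phi>\<^sub>1(g)x = y\<close> to \<open>\<Phi>\<^sub>1(eg)x = \<Phi>\<^sub>1(e)y\<close> for regularisers \<open>e\<close>; anchoring \<open>e\<close> reduces this
  further to an identity for \<open>deg\<close> with \<open>d \<in> [e]\<^sub>\<E>\<close>, and \<open>\<Phi>\<^sub>2(deg) \<supseteq> \<Phi>\<^sub>2(de)\<Phi>\<^sub>2(g)\<close>
  is everywhere defined, so the first step applies.  Thus the calculi agree on all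
  \<open>\<Phi>\<^sub>2\<close>-bounded and, symmetrically, all \<open>\<Phi>\<^sub>1\<close>-bounded elements, and since the calculus
  property describes \<open>\<Phi>(f)\<close> through bounded operators only, \<open>\<Phi>\<^sub>1(f) = \<Phi>\<^sub>2(f)\<close>.\<close>

lemma closed_op_single_valued:
  assumes "closed_op sX T" "(x, y) \<in> T" "(x, z) \<in> T"
  shows "y = z"
  using assms unfolding closed_op_def by blast

lemma closed_op_diff_zero:
  assumes "complex_banach_scaling sX" "closed_op sX T" "(a, w) \<in> T" "(b, w) \<in> T"
  shows "(a - b, 0) \<in> T"
proof -
  have "sX (complex_of_real (-1)) z = - z" for z
    using assms(1) unfolding complex_banach_scaling_def by (metis scaleR_minus1_left)
  then have "(- b, - w) \<in> T"
    using assms(2,4) unfolding closed_op_def by metis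
  then have "(a + - b, w + - w) \<in> T"
    using assms(2,3) unfolding closed_op_def by blast
  then show ?thesis by simp
qed

lemma bounded_op_total:
  assumes "bounded_op T"
  shows "\<exists>y. (x, y) \<in> T"
  using assms unfolding bounded_op_def by blast

lemma proto_calculus_closed_op:
  assumes "proto_calculus sX sF \<Phi>"
  shows "closed_op sX (\<Phi> f)"
  using assms by (simp add: proto_calculus_def)

lemma proto_calculus_mult:
  assumes "proto_calculus sX sF \<Phi>" "(x, y) \<in> \<Phi> g" "(y, z) \<in> \<Phi> f"
  shows "(x, z) \<in> \<Phi> (f * g)"
  using assms unfolding proto_calculus_def op_comp_def by blast

lemma proto_calculus_Domain_mult:
  assumes "proto_calculus sX sF \<Phi>" "Domain (\<Phi> f) = UNIV" "Domain (\<Phi> g) = UNIV"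
  shows "Domain (\<Phi> (f * g)) = UNIV"
proof -
  have "x \<in> Domain (\<Phi> (f * g))" for x
  proof -
    obtain y z where "(x, y) \<in> \<Phi> g" "(y, z) \<in> \<Phi> f"
      using assms(2,3) by (metis Domain_iff UNIV_I)
    then show ?thesis using proto_calculus_mult[OF assms(1)] by blast
  qed
  then show ?thesis by blast
qed

lemma calculus_graphI:
  assumes "calculus sX sF \<Phi>"
    and "\<And>e. e \<in> reg_set \<Phi> f \<Longrightarrow> \<exists>w. (x, w) \<in> \<Phi> (e * f) \<and> (y, w) \<in> \<Phi> e"
  shows "(x, y) \<in> \<Phi> f"
  using assms unfolding calculus_def by blast

lemma anchored_in_cong:
  assumes "\<forall>e \<in> E. \<Phi>1 e = \<Phi>2 e"
  shows "anchored_in \<Phi>1 E f \<longleftrightarrow> anchored_in \<Phi>2 E f"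
proof -
  have "\<forall>e \<in> anchor_set E f. \<Phi>1 e = \<Phi>2 e"
    using assms unfolding anchor_set_def by auto
  then show ?thesis unfolding anchored_in_def by simp
qed

lemma anchored_in_eqI:
  assumes "complex_banach_scaling sX" "proto_calculus sX sF \<Phi>" "anchored_in \<Phi> E f"
    and "\<And>d. d \<in> anchor_set E f \<Longrightarrow> \<exists>w. (u, w) \<in> \<Phi> d \<and> (v, w) \<in> \<Phi> d"
  shows "u = v"
proof -
  have "u - v \<in> (\<Inter>d \<in> anchor_set E f. op_ker (\<Phi> d))"
    using assms(4) closed_op_diff_zero[OF assms(1) proto_calculus_closed_op[OF assms(2)]]
    unfolding op_ker_def by blast
  then show ?thesis
    using assms(3) unfolding anchored_in_def by auto
qed

lemma graph_subset_if_Domain_UNIV: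
  assumes sX: "complex_banach_scaling sX"
    and \<Phi>1: "proto_calculus sX sF \<Phi>1" and \<Phi>2: "proto_calculus sX sF \<Phi>2"
    and agree: "\<forall>e \<in> E. \<Phi>1 e = \<Phi>2 e \<and> bounded_op (\<Phi>1 e)"
    and anchored: "anchored_in \<Phi>1 E g"
    and total: "Domain (\<Phi>2 g) = UNIV"
  shows "\<Phi>1 g \<subseteq> \<Phi>2 g"
proof clarify
  fix x y
  assume y: "(x, y) \<in> \<Phi>1 g"
  obtain y' where y': "(x, y') \<in> \<Phi>2 g" using total by blast
  have "y = y'"
  proof (rule anchored_in_eqI[OF sX \<Phi>1 anchored])
    fix d
    assume "d \<in> anchor_set E g"
    then have d: "d \<in> E" and dg: "d * g \<in> E" unfolding anchor_set_def by auto
    obtain w where w: "(y, w) \<in> \<Phi>1 d" using agree d bounded_op_total by blast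
    obtain w' where w': "(y', w') \<in> \<Phi>1 d" using agree d bounded_op_total by blast
    have "(x, w) \<in> \<Phi>1 (d * g)" using proto_calculus_mult[OF \<Phi>1 y w] .
    moreover have "(x, w') \<in> \<Phi>1 (d * g)"
      using proto_calculus_mult[OF \<Phi>2 y'] w' agree d dg by metis
    ultimately have "w = w'"
      using closed_op_single_valued proto_calculus_closed_op[OF \<Phi>1] by blast
    then show "\<exists>w. (y, w) \<in> \<Phi>1 d \<and> (y', w) \<in> \<Phi>1 d" using w w' by blast
  qed
  then show "(x, y) \<in> \<Phi>2 g" using y' by simp
qed

lemma graph_subset_if_bounded:
  assumes sX: "complex_banach_scaling sX"
    and \<Phi>1: "calculus sX sF \<Phi>1" and \<Phi>2: "proto_calculus sX sF \<Phi>2"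
    and agree: "\<forall>e \<in> E. \<Phi>1 e = \<Phi>2 e \<and> bounded_op (\<Phi>1 e)"
    and anchored: "\<forall>f. anchored_in \<Phi>1 E f"
    and g: "bounded_op (\<Phi>2 g)"
  shows "\<Phi>2 g \<subseteq> \<Phi>1 g"
proof clarify
  fix x y
  assume y: "(x, y) \<in> \<Phi>2 g"
  have proto1: "proto_calculus sX sF \<Phi>1" using \<Phi>1 unfolding calculus_def by blast
  have total_g: "Domain (\<Phi>2 g) = UNIV" using g unfolding bounded_op_def by blast
  show "(x, y) \<in> \<Phi>1 g"
  proof (rule calculus_graphI[OF \<Phi>1])
    fix e
    assume "e \<in> reg_set \<Phi>1 g"
    then have e: "bounded_op (\<Phi>1 e)" and eg: "bounded_op (\<Phi>1 (e * g))"
      unfolding reg_set_def bdd_set_def by auto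
    obtain w where w: "(x, w) \<in> \<Phi>1 (e * g)" using eg bounded_op_total by blast
    obtain v where v: "(y, v) \<in> \<Phi>1 e" using e bounded_op_total by blast
    have "w = v"
    proof (rule anchored_in_eqI[OF sX proto1 anchored[rule_format]])
      fix d
      assume "d \<in> anchor_set E e"
      then have d: "d \<in> E" and de: "d * e \<in> E" unfolding anchor_set_def by auto
      obtain a where a: "(w, a) \<in> \<Phi>1 d" using agree d bounded_op_total by blast
      obtain b where b: "(v, b) \<in> \<Phi>1 d" using agree d bounded_op_total by blast
      have "(x, a) \<in> \<Phi>1 (d * e * g)"
        using proto_calculus_mult[OF proto1 w a] by (simp add: mult.assoc)
      moreover have "Domain (\<Phi>2 (d * e * g)) = UNIV"
        using proto_calculus_Domain_mult[OF \<Phi>2 _ total_g] agree de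
        unfolding bounded_op_def by metis
      ultimately have "(x, a) \<in> \<Phi>2 (d * e * g)"
        using graph_subset_if_Domain_UNIV[OF sX proto1 \<Phi>2 agree] anchored by blast
      moreover have "(x, b) \<in> \<Phi>2 (d * e * g)"
        using proto_calculus_mult[OF \<Phi>2 y] proto_calculus_mult[OF proto1 v b] agree de
        by metis
      ultimately have "a = b"
        using closed_op_single_valued proto_calculus_closed_op[OF \<Phi>2] by blast
      then show "\<exists>a. (w, a) \<in> \<Phi>1 d \<and> (v, a) \<in> \<Phi>1 d" using a b by blast
    qed
    then show "\<exists>w. (x, w) \<in> \<Phi>1 (e * g) \<and> (y, w) \<in> \<Phi>1 e" using w v by blast
  qed
qed

lemma agree_on_bdd_set:
  assumes sX: "complex_banach_scaling sX"
    and \<Phi>1: "calculus sX sF \<Phi>1" and \<Phi>2: "proto_calculus sX sF \<Phi>2"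
    and agree: "\<forall>e \<in> E. \<Phi>1 e = \<Phi>2 e \<and> bounded_op (\<Phi>1 e)"
    and anchored: "\<forall>f. anchored_in \<Phi>1 E f"
    and g: "g \<in> bdd_set \<Phi>2"
  shows "\<Phi>1 g = \<Phi>2 g"
proof
  have proto1: "proto_calculus sX sF \<Phi>1" using \<Phi>1 unfolding calculus_def by blast
  have "Domain (\<Phi>2 g) = UNIV" using g unfolding bdd_set_def bounded_op_def by blast
  then show "\<Phi>1 g \<subseteq> \<Phi>2 g"
    using graph_subset_if_Domain_UNIV[OF sX proto1 \<Phi>2 agree] anchored by blast
  show "\<Phi>2 g \<subseteq> \<Phi>1 g"
    using graph_subset_if_bounded[OF sX \<Phi>1 \<Phi>2 agree anchored] g unfolding bdd_set_def by blast
qed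

lemma calculus_subset_if_agree_on_bdd_set:
  assumes \<Phi>1: "proto_calculus sX sF \<Phi>1" and \<Phi>2: "calculus sX sF \<Phi>2"
    and agree: "\<forall>g \<in> bdd_set \<Phi>2. \<Phi>1 g = \<Phi>2 g"
  shows "\<Phi>1 f \<subseteq> \<Phi>2 f"
proof clarify
  fix x y
  assume y: "(x, y) \<in> \<Phi>1 f"
  show "(x, y) \<in> \<Phi>2 f"
  proof (rule calculus_graphI[OF \<Phi>2])
    fix e
    assume "e \<in> reg_set \<Phi>2 f"
    then have e: "e \<in> bdd_set \<Phi>2" and ef: "e * f \<in> bdd_set \<Phi>2"
      unfolding reg_set_def by auto
    obtain w where w: "(y, w) \<in> \<Phi>2 e"
      using e bounded_op_total unfolding bdd_set_def by blast
    have "(x, w) \<in> \<Phi>2 (e * f)"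
      using proto_calculus_mult[OF \<Phi>1 y] w agree e ef by metis
    then show "\<exists>w. (x, w) \<in> \<Phi>2 (e * f) \<and> (y, w) \<in> \<Phi>2 e" using w by blast
  qed
qed

theorem theorem5p2:
  fixes sX :: "complex \<Rightarrow> 'x::banach \<Rightarrow> 'x"
    and sF :: "complex \<Rightarrow> 'f::{ring,monoid_mult} \<Rightarrow> 'f"
    and \<Phi>1 \<Phi>2 :: "'f \<Rightarrow> ('x \<times> 'x) set"
    and E :: "'f set"
  assumes "complex_banach_scaling sX"
    and "complex_algebra_scaling sF"
    and "calculus sX sF \<Phi>1"
    and "calculus sX sF \<Phi>2"
    and "\<forall>e \<in> E. \<Phi>1 e = \<Phi>2 e \<and> bounded_op (\<Phi>1 e)"
    and "\<forall>f. anchored_in \<Phi>1 E f"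
  shows "\<Phi>1 = \<Phi>2"
proof -
  have proto: "proto_calculus sX sF \<Phi>1" "proto_calculus sX sF \<Phi>2"
    using assms(3,4) unfolding calculus_def by blast+
  have agree21: "\<forall>e \<in> E. \<Phi>2 e = \<Phi>1 e \<and> bounded_op (\<Phi>2 e)"
    using assms(5) by auto
  have anchored2: "\<forall>f. anchored_in \<Phi>2 E f"
    using assms(6) anchored_in_cong agree21 by blast
  have "\<forall>g \<in> bdd_set \<Phi>2. \<Phi>1 g = \<Phi>2 g"
    using agree_on_bdd_set[OF assms(1,3) proto(2) assms(5,6)] by blast
  then have "\<Phi>1 f \<subseteq> \<Phi>2 f" for f
    using calculus_subset_if_agree_on_bdd_set[OF proto(1) assms(4)] by blast
  moreover have "\<forall>g \<in> bdd_set \<Phi>1. \<Phi>2 g = \<Phi>1 g"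
    using agree_on_bdd_set[OF assms(1,4) proto(1) agree21 anchored2] by blast
  then have "\<Phi>2 f \<subseteq> \<Phi>1 f" for f
    using calculus_subset_if_agree_on_bdd_set[OF proto(2) assms(3)] by blast
  ultimately show ?thesis by (simp add: fun_eq_iff subset_antisym)
qed

end
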